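(* Assume $P$ is symmetric and transitive, and let $X_t=(\Phi^* )^t(I-J)$ for $t\ge0$. Then for every $t\ge0$: (1) $X_t\in\mathrm{Span}\{P^k,J:0\le k\le 2t\}$; in particular all diagonal entries of $X_t$ are equal, to a common value denoted $r_t$; (2) $X_{t+1}=P_qX_tP_q+q^2r_t\,(I-P^2)$.
   Context: $P$ is a row-stochastic $N\times N$ matrix, $q\in[0,1]$, $P_q=(1-q)I+qP$, $J=\mathbf 1\mathbf 1^\top/N$. $P$ is transitive if for every pair $(i,j)$ there is a permutation matrix $\Pi$ with $\Pi_{ij}=1$ and $\Pi P\Pi^{-1}=P$. $\beta_1,\dots,\beta_N$ are independent random variables in $\{1,\dots,N\}$ with $\mathbb P(\beta_i=j)=p_{ij}$, $e_i$ the standard basis vectors, $K=(1-q)I+q\sum_ie_ie_{\beta_i}^\top$, $\Phi(X)=\mathbb E[KXK^\top]$, and $\Phi^*$ is its adjoint with respect to $\langle A,B\rangle=\mathrm{Tr}(AB^\top)$; $(\Phi^* )^t$ is the $t$-fold composition. *)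

theory Defs
  imports "HOL-Analysis.Analysis"
begin

text \<open>N x N real matrices are represented as real^'n^'n with N = CARD('n).
  The HOL-Analysis inner product on real^'n^'n is sum_{i,j} A_ij B_ij = Tr(A B^T).\<close>

definition row_stochastic :: "real^'n^'n \<Rightarrow> bool" where
  "row_stochastic P \<longleftrightarrow> (\<forall>i j. P$i$j \<ge> 0) \<and> (\<forall>i. (\<Sum>j\<in>UNIV. P$i$j) = 1)"

definition perm_matrix :: "real^'n^'n \<Rightarrow> bool" where
  "perm_matrix M \<longleftrightarrow> (\<exists>\<sigma>. bij \<sigma> \<and> M = (\<chi> i j. if j = \<sigma> i then 1 else 0))"

definition transitive_mat :: "real^'n^'n \<Rightarrow> bool" where
  "transitive_mat P \<longleftrightarrow> (\<forall>i j. \<exists>Pm. perm_matrix Pm \<and> Pm$i$j = 1 \<and> Pm ** P ** matrix_inv Pm = P)"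

definition Jmat :: "real^'n^'n" where
  "Jmat = (\<chi> i j. 1 / real CARD('n))"

definition mpow :: "real^'n^'n \<Rightarrow> nat \<Rightarrow> real^'n^'n" where
  "mpow A k = ((\<lambda>X. A ** X) ^^ k) (mat 1)"

definition Pq :: "real \<Rightarrow> real^'n^'n \<Rightarrow> real^'n^'n" where
  "Pq q P = (1 - q) *\<^sub>R mat 1 + q *\<^sub>R P"

text \<open>The random matrix K for a realisation b of (beta_1,...,beta_N):
  K = (1-q) I + q sum_i e_i e_{b i}^T.\<close>
definition Kmat :: "real \<Rightarrow> ('n \<Rightarrow> 'n) \<Rightarrow> real^'n^'n" where
  "Kmat q b = (1 - q) *\<^sub>R mat 1 + q *\<^sub>R (\<chi> i j. if j = b i then 1 else 0)"

text \<open>Phi(X) = E[K X K^T], the beta_i independent with P(beta_i = j) = P_ij.\<close>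
definition Phi :: "real^'n^'n \<Rightarrow> real \<Rightarrow> real^'n^'n \<Rightarrow> real^'n^'n" where
  "Phi P q X = (\<Sum>b\<in>(UNIV :: ('n \<Rightarrow> 'n) set). (\<Prod>i\<in>UNIV. P$i$(b i)) *\<^sub>R
                   (Kmat q b ** X ** transpose (Kmat q b)))"

end

theory Submission
  imports Defs
begin

text \<open>The \<open>\<beta>\<^sub>i\<close> are independent, so \<open>E[K\<^sub>i\<^sub>j K\<^sub>k\<^sub>l] = (P\<^sub>q)\<^sub>i\<^sub>j (P\<^sub>q)\<^sub>k\<^sub>l\<close> except for
  \<open>i = k\<close>, where the covariance \<open>q\<^sup>2 (\<delta>\<^sub>j\<^sub>l P\<^sub>i\<^sub>j - P\<^sub>i\<^sub>j P\<^sub>i\<^sub>l)\<close> is added. Hence \<open>\<Phi>\<^sup>*(Y)\<close> is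
  \<open>P\<^sub>q Y P\<^sub>q\<close> plus a correction that only sees the diagonal of \<open>Y\<close>; if that diagonal is constant
  \<open>r\<close> and \<open>P\<close> is symmetric, hence doubly stochastic, the correction is \<open>q\<^sup>2 r (I - P\<^sup>2)\<close>.
  Transitivity provides, for all \<open>i, j\<close>, a permutation matrix sending \<open>i\<close> to \<open>j\<close> and commuting with
  \<open>P\<close>, so every power of \<open>P\<close>, and every matrix in the span of \<open>J\<close> and these powers, has constant
  diagonal. Since \<open>PJ = JP = J\<close>, that span grows by two degrees under \<open>Y \<mapsto> P\<^sub>q Y P\<^sub>q + c (I - P\<^sup>2)\<close>,
  and both claims follow by induction on \<open>t\<close>.\<close>

lemma inner_matrix_eq_trace: "inner (A::real^'n^'m) B = trace (A ** transpose B)"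
  by (simp add: inner_vec_def trace_def matrix_matrix_mult_def transpose_def)

lemma inner_conjugate_left:
  "inner (K ** X ** transpose K) Y = inner (X::real^'n^'n) (transpose K ** Y ** K)"
proof -
  have "trace (K ** X ** transpose K ** transpose Y) = trace (X ** (transpose K ** transpose Y ** K))"
    by (metis matrix_mul_assoc trace_mul_sym)
  then show ?thesis
    by (simp add: inner_matrix_eq_trace matrix_transpose_mul matrix_mul_assoc)
qed

lemma conjugate_nth:
  fixes A :: "'a::comm_semiring_1^'n^'n"
  shows "(transpose A ** Y ** A) $ j $ l = (\<Sum>i\<in>UNIV. \<Sum>k\<in>UNIV. Y$i$k * (A$i$j * A$k$l))"
proof -
  have "(transpose A ** Y ** A) $ j $ l = (\<Sum>k\<in>UNIV. \<Sum>i\<in>UNIV. Y$i$k * (A$i$j * A$k$l))"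
    by (simp add: matrix_matrix_mult_def transpose_def sum_distrib_left sum_distrib_right mult_ac)
  then show ?thesis by (rule trans) (rule sum.swap)
qed

definition Phi_adj :: "real^'n^'n \<Rightarrow> real \<Rightarrow> real^'n^'n \<Rightarrow> real^'n^'n" where
  "Phi_adj P q Y = (\<Sum>b\<in>(UNIV :: ('n \<Rightarrow> 'n) set). (\<Prod>i\<in>UNIV. P$i$(b i)) *\<^sub>R
                      (transpose (Kmat q b) ** Y ** Kmat q b))"

lemma adjoint_Phi:
  fixes P :: "real^'n^'n"
  shows "adjoint (Phi P q) = Phi_adj P q"
proof (rule adjoint_unique, intro allI)
  fix X Y :: "real^'n^'n"
  show "inner (Phi P q X) Y = inner X (Phi_adj P q Y)"
    unfolding Phi_def Phi_adj_def by (simp add: inner_sum_left inner_sum_right inner_conjugate_left)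
qed

lemma sum_prod_rows_two_coords:
  fixes P :: "real^'n^'n" and g h :: "'n \<Rightarrow> real"
  assumes rows: "\<And>m. (\<Sum>x\<in>UNIV. P$m$x) = 1"
  shows "(\<Sum>b\<in>(UNIV::('n\<Rightarrow>'n) set). (\<Prod>m\<in>UNIV. P$m$(b m)) * (g (b i) * h (b k)))
       = (if i = k then (\<Sum>x\<in>UNIV. P$i$x * g x * h x)
          else (\<Sum>x\<in>UNIV. P$i$x * g x) * (\<Sum>x\<in>UNIV. P$k$x * h x))"
proof -
  define F where "F m x = P$m$x * (if m = i then g x else 1) * (if m = k then h x else 1)" for m x
  have "(\<Prod>m\<in>UNIV. P$m$(b m)) * (g (b i) * h (b k)) = (\<Prod>m\<in>UNIV. F m (b m))" for b :: "'n \<Rightarrow> 'n"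
    by (simp add: F_def prod.distrib prod.delta)
  then have "(\<Sum>b\<in>(UNIV::('n\<Rightarrow>'n) set). (\<Prod>m\<in>UNIV. P$m$(b m)) * (g (b i) * h (b k)))
      = (\<Prod>m\<in>UNIV. \<Sum>x\<in>UNIV. F m x)"
    using prod_sum_PiE[of "UNIV::'n set" "\<lambda>_. UNIV" F] by simp
  also have "\<dots> = (\<Prod>m\<in>{i,k}. \<Sum>x\<in>UNIV. F m x) * (\<Prod>m\<in>UNIV-{i,k}. \<Sum>x\<in>UNIV. F m x)"
    using prod.subset_diff[of "{i,k}" UNIV] by (simp add: mult.commute)
  also have "(\<Prod>m\<in>UNIV-{i,k}. \<Sum>x\<in>UNIV. F m x) = 1"
    by (rule prod.neutral) (simp add: F_def rows)
  finally show ?thesis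
    by (cases "i = k") (auto simp: F_def mult.assoc)
qed

text \<open>\<open>K_entry q i j x\<close> is the entry \<open>K\<^sub>i\<^sub>j\<close> on the event \<open>\<beta>\<^sub>i = x\<close>.\<close>

definition K_entry :: "real \<Rightarrow> 'n \<Rightarrow> 'n \<Rightarrow> 'n \<Rightarrow> real" where
  "K_entry q i j x = (1-q) * (if i = j then 1 else 0) + q * (if j = x then 1 else 0)"

lemma Kmat_nth: "Kmat q b $ i $ j = K_entry q i j (b i)"
  by (simp add: Kmat_def K_entry_def mat_def)

lemma Pq_nth: "Pq q P $ i $ j = (1-q) * (if i = j then 1 else 0) + q * P$i$j"
  by (simp add: Pq_def mat_def)

lemma sum_times_indicator: "(\<Sum>x\<in>UNIV. (f (x::'n::finite)::real) * (if j = x then 1 else 0)) = f j"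
  by (simp add: if_distrib[of "(*) _"] eq_commute[of j] cong: if_cong)

lemma sum_row_K_entry:
  assumes "row_stochastic P"
  shows "(\<Sum>x\<in>UNIV. (P::real^'n^'n)$i$x * K_entry q i j x) = Pq q P $ i $ j"
proof -
  have "(\<Sum>x\<in>UNIV. P$i$x * K_entry q i j x)
      = (\<Sum>x\<in>UNIV. (1-q) * (if i = j then 1 else 0) * P$i$x + q * (P$i$x * (if j = x then 1 else 0)))"
    by (rule sum.cong) (auto simp: K_entry_def algebra_simps)
  also have "\<dots> = (1-q) * (if i = j then 1 else 0) * (\<Sum>x\<in>UNIV. P$i$x) + q * P$i$j"
    by (simp add: sum.distrib sum_distrib_left[symmetric] sum_times_indicator)
  finally show ?thesis using assms by (simp add: row_stochastic_def Pq_nth)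
qed

lemma sum_row_K_entry_product:
  assumes "row_stochastic P"
  shows "(\<Sum>x\<in>UNIV. (P::real^'n^'n)$i$x * K_entry q i j x * K_entry q i l x)
     = Pq q P $ i $ j * Pq q P $ i $ l + q^2 * ((if j = l then 1 else 0) * P$i$j - P$i$j * P$i$l)"
proof -
  define a where "a = (1-q)^2 * (if i = j then 1 else 0) * (if i = l then (1::real) else 0)"
  define b where "b = q*(1-q) * (if i = l then (1::real) else 0)"
  define c where "c = q*(1-q) * (if i = j then (1::real) else 0)"
  define d where "d = q^2 * (if j = l then (1::real) else 0)"
  have "(\<Sum>x\<in>UNIV. P$i$x * K_entry q i j x * K_entry q i l x)
      = (\<Sum>x\<in>UNIV. a * P$i$x + (b + d) * (P$i$x * (if j = x then 1 else 0))
                   + c * (P$i$x * (if l = x then 1 else 0)))"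
    by (rule sum.cong) (auto simp: K_entry_def a_def b_def c_def d_def algebra_simps power2_eq_square)
  also have "\<dots> = a * (\<Sum>x\<in>UNIV. P$i$x) + (b + d) * P$i$j + c * P$i$l"
    by (simp add: sum.distrib sum_distrib_left[symmetric] sum_times_indicator)
  finally show ?thesis using assms
    by (auto simp: row_stochastic_def Pq_nth a_def b_def c_def d_def algebra_simps power2_eq_square)
qed

lemma expectation_K_entry_product:
  assumes "row_stochastic P"
  shows "(\<Sum>b\<in>(UNIV::('n\<Rightarrow>'n) set). (\<Prod>m\<in>UNIV. (P::real^'n^'n)$m$(b m)) * (K_entry q i j (b i) * K_entry q k l (b k)))
     = Pq q P $ i $ j * Pq q P $ k $ l
       + (if i = k then q^2 * ((if j = l then 1 else 0) * P$i$j - P$i$j * P$i$l) else 0)"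
proof -
  have "\<And>m. (\<Sum>x\<in>UNIV. P$m$x) = 1" using assms by (simp add: row_stochastic_def)
  then show ?thesis
    using sum_prod_rows_two_coords[of P "K_entry q i j" i "K_entry q k l" k]
      sum_row_K_entry[OF assms] sum_row_K_entry_product[OF assms]
    by (simp add: mult.assoc)
qed

lemma Phi_adj_nth:
  fixes P :: "real^'n^'n"
  shows "Phi_adj P q Y $ j $ l = (\<Sum>i\<in>UNIV. \<Sum>k\<in>UNIV. Y$i$k *
     (\<Sum>b\<in>(UNIV::('n\<Rightarrow>'n) set). (\<Prod>m\<in>UNIV. P$m$(b m)) * (K_entry q i j (b i) * K_entry q k l (b k))))"
proof -
  have "Phi_adj P q Y $ j $ l = (\<Sum>b\<in>(UNIV::('n\<Rightarrow>'n) set). \<Sum>i\<in>UNIV. \<Sum>k\<in>UNIV.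
       Y$i$k * ((\<Prod>m\<in>UNIV. P$m$(b m)) * (K_entry q i j (b i) * K_entry q k l (b k))))"
    by (simp add: Phi_adj_def conjugate_nth Kmat_nth sum_distrib_left mult_ac)
  also have "\<dots> = (\<Sum>i\<in>UNIV. \<Sum>k\<in>UNIV. \<Sum>b\<in>(UNIV::('n\<Rightarrow>'n) set).
       Y$i$k * ((\<Prod>m\<in>UNIV. P$m$(b m)) * (K_entry q i j (b i) * K_entry q k l (b k))))"
    by (subst sum.swap) (simp add: sum.swap[of _ "UNIV::('n\<Rightarrow>'n) set"])
  finally show ?thesis by (simp add: sum_distrib_left)
qed

lemma symmetric_matrix_nth: "transpose P = P \<Longrightarrow> P$i$j = P$j$i"
  by (metis transpose_def vec_lambda_beta)

lemma Phi_adj_const_diag: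
  fixes P :: "real^'n^'n"
  assumes rs: "row_stochastic P" and symm: "transpose P = P" and diag: "\<And>i. Y$i$i = r"
  shows "Phi_adj P q Y = Pq q P ** Y ** Pq q P + (q^2 * r) *\<^sub>R (mat 1 - P ** P)"
proof (intro vec_eq_iff[THEN iffD2] allI)
  fix j l
  let ?Q = "Pq q P"
  note Ps = symmetric_matrix_nth[OF symm]
  have col_sum: "(\<Sum>i\<in>UNIV. P$i$j) = 1"
    using rs by (simp add: row_stochastic_def Ps[of _ j])
  have "Phi_adj P q Y $ j $ l = (\<Sum>i\<in>UNIV. \<Sum>k\<in>UNIV. Y$i$k * ?Q$i$j * ?Q$k$l)
      + (\<Sum>i\<in>UNIV. \<Sum>k\<in>UNIV.
           if i = k then Y$i$k * q^2 * ((if j = l then 1 else 0) * P$i$j - P$i$j * P$i$l) else 0)"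
    unfolding Phi_adj_nth expectation_K_entry_product[OF rs] sum.distrib[symmetric]
    by (intro sum.cong refl) (simp add: algebra_simps)
  also have "(\<Sum>i\<in>UNIV. \<Sum>k\<in>UNIV.
           if i = k then Y$i$k * q^2 * ((if j = l then 1 else 0) * P$i$j - P$i$j * P$i$l) else 0)
      = q^2 * r * ((if j = l then 1 else 0) * (\<Sum>i\<in>UNIV. P$i$j) - (\<Sum>i\<in>UNIV. P$j$i * P$i$l))"
    by (simp add: diag sum_distrib_left sum_subtractf right_diff_distrib Ps[of _ j] mult_ac)
  also have "(\<Sum>i\<in>UNIV. \<Sum>k\<in>UNIV. Y$i$k * ?Q$i$j * ?Q$k$l) = (?Q ** Y ** ?Q) $ j $ l"
  proof -
    have "transpose ?Q = ?Q"
      by (auto simp: vec_eq_iff transpose_def Pq_nth Ps)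
    then show ?thesis using conjugate_nth[of ?Q Y j l] by (simp add: mult.assoc)
  qed
  finally show "Phi_adj P q Y $ j $ l = (?Q ** Y ** ?Q + (q^2 * r) *\<^sub>R (mat 1 - P ** P)) $ j $ l"
    by (simp add: col_sum mat_def matrix_matrix_mult_def algebra_simps)
qed

definition const_diag :: "'a^'n^'n \<Rightarrow> bool" where
  "const_diag A \<longleftrightarrow> (\<forall>i j. A$i$i = A$j$j)"

lemma subspace_const_diag: "subspace (Collect (const_diag :: real^'n^'n \<Rightarrow> bool))"
  by (simp add: subspace_def const_diag_def) metis

definition perm_mat :: "('n \<Rightarrow> 'n) \<Rightarrow> real^'n^'n" where
  "perm_mat \<sigma> = (\<chi> i j. if j = \<sigma> i then 1 else 0)"

lemma perm_mat_mult_nth: "(perm_mat \<sigma> ** A) $ i $ k = A $ \<sigma> i $ k"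
  by (simp add: perm_mat_def matrix_matrix_mult_def if_distrib[of "\<lambda>x. x * _"] cong: if_cong)

lemma mult_perm_mat_nth: "inj \<sigma> \<Longrightarrow> (A ** perm_mat \<sigma>) $ i $ \<sigma> i = A $ i $ i"
  by (simp add: perm_mat_def matrix_matrix_mult_def inj_eq if_distrib[of "(*) _"] cong: if_cong)

lemma orthogonal_perm_mat: "inj \<sigma> \<Longrightarrow> orthogonal_matrix (perm_mat \<sigma>)"
proof -
  assume "inj \<sigma>"
  then have "(perm_mat \<sigma> ** transpose (perm_mat \<sigma>)) $ i $ k = mat 1 $ i $ k" for i k
    unfolding perm_mat_mult_nth by (simp add: transpose_def perm_mat_def mat_def inj_eq)
  then have "perm_mat \<sigma> ** transpose (perm_mat \<sigma>) = mat 1"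
    by (simp add: vec_eq_iff)
  then show ?thesis
    by (simp add: orthogonal_matrix_def matrix_left_right_inverse)
qed

lemma orthogonal_matrix_inv: "orthogonal_matrix Q \<Longrightarrow> matrix_inv Q ** Q = mat 1"
  unfolding matrix_inv_def orthogonal_matrix_def by (rule someI2[where a = "transpose Q"]) auto

lemma commute_if_conjugate_eq:
  assumes "matrix_inv Q ** Q = mat 1" "Q ** P ** matrix_inv Q = P"
  shows "Q ** P = P ** Q"
proof -
  have "Q ** P = Q ** P ** (matrix_inv Q ** Q)" by (simp add: assms(1))
  also have "\<dots> = (Q ** P ** matrix_inv Q) ** Q" by (simp only: matrix_mul_assoc)
  also have "\<dots> = P ** Q" by (simp only: assms(2))
  finally show ?thesis .
qed

lemma mpow_0: "mpow A 0 = mat 1"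
  by (simp add: mpow_def)

lemma mpow_Suc: "mpow A (Suc k) = A ** mpow A k"
  by (simp add: mpow_def)

lemma mpow_Suc_right: "mpow A (Suc k) = mpow A k ** A"
  by (induction k) (simp_all add: mpow_Suc mpow_0 matrix_mul_assoc)

lemma mpow_commute:
  assumes "Q ** P = P ** Q"
  shows "Q ** mpow P k = mpow P k ** Q"
proof (induction k)
  case 0
  then show ?case by (simp add: mpow_0)
next
  case (Suc k)
  have "Q ** mpow P (Suc k) = (Q ** P) ** mpow P k" by (simp add: mpow_Suc matrix_mul_assoc)
  also have "\<dots> = P ** (Q ** mpow P k)" by (simp add: assms matrix_mul_assoc)
  also have "\<dots> = mpow P (Suc k) ** Q" by (simp add: Suc mpow_Suc matrix_mul_assoc)
  finally show ?case .
qed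

lemma diag_eq_if_commutes_perm_mat:
  assumes "inj \<sigma>" "perm_mat \<sigma> ** A = A ** perm_mat \<sigma>"
  shows "A $ \<sigma> i $ \<sigma> i = A $ i $ i"
  using arg_cong[OF assms(2), of "\<lambda>M. M $ i $ \<sigma> i"]
  by (simp add: perm_mat_mult_nth mult_perm_mat_nth[OF assms(1)])

lemma transitive_mat_commuting_perm_mat:
  assumes "transitive_mat P"
  obtains \<sigma> where "inj \<sigma>" "\<sigma> i = j" "perm_mat \<sigma> ** P = P ** perm_mat \<sigma>"
proof -
  obtain Q where Q: "perm_matrix Q" "Q$i$j = 1" "Q ** P ** matrix_inv Q = P"
    using assms transitive_mat_def by blast
  obtain \<sigma> where \<sigma>: "bij \<sigma>" "Q = perm_mat \<sigma>"
    using Q(1) unfolding perm_matrix_def perm_mat_def by blast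
  have "inj \<sigma>" using \<sigma>(1) bij_is_inj by blast
  moreover have "\<sigma> i = j" using Q(2) \<sigma>(2) by (simp add: perm_mat_def split: if_splits)
  moreover have "Q ** P = P ** Q"
    using commute_if_conjugate_eq orthogonal_matrix_inv orthogonal_perm_mat \<open>inj \<sigma>\<close> \<sigma>(2) Q(3) by blast
  ultimately show ?thesis using that \<sigma>(2) by blast
qed

lemma transitive_mat_const_diag_mpow:
  assumes "transitive_mat P"
  shows "const_diag (mpow P k)"
  unfolding const_diag_def
proof (intro allI)
  fix i j
  obtain \<sigma> where "inj \<sigma>" "\<sigma> i = j" "perm_mat \<sigma> ** P = P ** perm_mat \<sigma>"
    using transitive_mat_commuting_perm_mat[OF assms] .
  then show "mpow P k $ i $ i = mpow P k $ j $ j"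
    using diag_eq_if_commutes_perm_mat[OF \<open>inj \<sigma>\<close> mpow_commute] by metis
qed

definition pow_J_gens :: "real^'n^'n \<Rightarrow> nat \<Rightarrow> (real^'n^'n) set" where
  "pow_J_gens P m = {mpow P k | k. k \<le> m} \<union> {Jmat}"

lemma span_pow_J_gens_mono: "m \<le> m' \<Longrightarrow> span (pow_J_gens P m) \<subseteq> span (pow_J_gens P m')"
  by (rule span_mono) (auto simp: pow_J_gens_def)

lemma const_diag_span_pow_J_gens:
  assumes "transitive_mat P" "A \<in> span (pow_J_gens P m)"
  shows "const_diag A"
  using assms(2)
proof (induction rule: span_induct)
  case base
  show ?case by (rule subspace_const_diag)
next
  case step
  then show ?case
    using transitive_mat_const_diag_mpow[OF assms(1)] by (auto simp: pow_J_gens_def const_diag_def Jmat_def)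
qed

lemma stochastic_mult_Jmat: "row_stochastic P \<Longrightarrow> P ** Jmat = Jmat"
  by (simp add: vec_eq_iff matrix_matrix_mult_def Jmat_def row_stochastic_def flip: sum_divide_distrib)

lemma Jmat_mult_symmetric_stochastic:
  assumes "row_stochastic P" "transpose P = P"
  shows "Jmat ** P = Jmat"
proof -
  have J: "transpose Jmat = (Jmat :: real^'n^'n)" by (simp add: Jmat_def transpose_def)
  have "Jmat ** P = transpose (transpose P ** transpose Jmat)" by (simp add: matrix_transpose_mul)
  also have "\<dots> = Jmat" by (simp only: J assms(2) stochastic_mult_Jmat[OF assms(1)])
  finally show ?thesis .
qed

lemma matrix_add_rdistrib: "((A::'a::semiring_1^'n^'m) + B) ** C = A ** C + B ** C"
  by (vector matrix_matrix_mult_def sum.distrib[symmetric] distrib_right)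

lemma mult_left_span_pow_J_gens:
  assumes "row_stochastic P" "A \<in> span (pow_J_gens P m)"
  shows "P ** A \<in> span (pow_J_gens P (Suc m))"
  using assms(2)
proof (induction rule: span_induct)
  case base
  show ?case
    by (auto simp: subspace_def matrix_add_ldistrib matrix_scalar_ac scalar_matrix_assoc[symmetric] span_zero intro: span_add span_scale)
next
  case (step B)
  then show ?case using stochastic_mult_Jmat[OF assms(1)]
    by (auto simp: pow_J_gens_def mpow_Suc[symmetric] intro!: span_base)
qed

lemma mult_right_span_pow_J_gens:
  assumes "row_stochastic P" "transpose P = P" "A \<in> span (pow_J_gens P m)"
  shows "A ** P \<in> span (pow_J_gens P (Suc m))"
  using assms(3)
proof (induction rule: span_induct)
  case base
  show ?case
    by (auto simp: subspace_def matrix_add_rdistrib scalar_matrix_assoc[symmetric] span_zero intro: span_add span_scale)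
next
  case (step B)
  then show ?case using Jmat_mult_symmetric_stochastic[OF assms(1,2)]
    by (auto simp: pow_J_gens_def mpow_Suc_right[symmetric] intro!: span_base)
qed

lemma Pq_mult: "Pq q P ** A = (1-q) *\<^sub>R A + q *\<^sub>R (P ** A)"
  by (simp add: Pq_def matrix_add_rdistrib scalar_matrix_assoc[symmetric])

lemma mult_Pq: "A ** Pq q P = (1-q) *\<^sub>R A + q *\<^sub>R (A ** P)"
  by (simp add: Pq_def matrix_add_ldistrib matrix_scalar_ac scalar_matrix_assoc[symmetric])

lemma Pq_conjugate_span_pow_J_gens:
  assumes "row_stochastic P" "transpose P = P" "A \<in> span (pow_J_gens P m)"
  shows "Pq q P ** A ** Pq q P + c *\<^sub>R (mat 1 - P ** P) \<in> span (pow_J_gens P (Suc (Suc m)))"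
proof -
  have "A \<in> span (pow_J_gens P (Suc m))"
    using assms(3) span_pow_J_gens_mono[of m "Suc m" P] by auto
  then have QA: "Pq q P ** A \<in> span (pow_J_gens P (Suc m))"
    unfolding Pq_mult by (intro span_add span_scale mult_left_span_pow_J_gens[OF assms(1,3)])
  then have "Pq q P ** A \<in> span (pow_J_gens P (Suc (Suc m)))"
    using span_pow_J_gens_mono[of "Suc m" "Suc (Suc m)" P] by auto
  then have "Pq q P ** A ** Pq q P \<in> span (pow_J_gens P (Suc (Suc m)))"
    unfolding mult_Pq by (intro span_add span_scale mult_right_span_pow_J_gens[OF assms(1,2) QA])
  moreover have "mat 1 - P ** P \<in> span (pow_J_gens P (Suc (Suc m)))"
  proof -
    have "mpow P 0 \<in> pow_J_gens P (Suc (Suc m))" "mpow P 2 \<in> pow_J_gens P (Suc (Suc m))"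
      by (auto simp: pow_J_gens_def)
    moreover have "mpow P 0 = mat 1" "mpow P 2 = P ** P"
      by (simp_all add: mpow_0 mpow_def numeral_2_eq_2)
    ultimately show ?thesis by (metis span_diff span_base)
  qed
  ultimately show ?thesis by (intro span_add span_scale)
qed

theorem lemma2:
  fixes P :: "real^'n^'n" and q :: real and t :: nat
  assumes "row_stochastic P"
    and "0 \<le> q" "q \<le> 1"
    and "transpose P = P"
    and "transitive_mat P"
  defines "X \<equiv> (\<lambda>s. (adjoint (Phi P q) ^^ s) (mat 1 - Jmat))"
  shows "X t \<in> span ({mpow P k | k. k \<le> 2 * t} \<union> {Jmat})
         \<and> (\<exists>r. \<forall>i. X t $ i $ i = r)
         \<and> (\<forall>i. X (Suc t) = Pq q P ** X t ** Pq q P + (q^2 * X t $ i $ i) *\<^sub>R (mat 1 - P ** P))"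
proof -
  note rs = assms(1) and symm = assms(4) and transitive = assms(5)
  have step: "X (Suc s) = Pq q P ** X s ** Pq q P + (q^2 * X s $ i $ i) *\<^sub>R (mat 1 - P ** P)"
    if "X s \<in> span (pow_J_gens P (2 * s))" for s i
    using const_diag_span_pow_J_gens[OF transitive that] Phi_adj_const_diag[OF rs symm]
    by (simp add: X_def adjoint_Phi const_diag_def)
  have span: "X s \<in> span (pow_J_gens P (2 * s))" for s
  proof (induction s)
    case 0
    have "X 0 = mpow P 0 - Jmat" by (simp add: X_def mpow_0)
    then show ?case by (simp add: pow_J_gens_def span_diff span_base)
  next
    case (Suc s)
    show ?case
      unfolding step[OF Suc, of undefined] using Pq_conjugate_span_pow_J_gens[OF rs symm Suc] by simp
  qed
  have diag: "X t $ i $ i = X t $ j $ j" for i j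
    using const_diag_span_pow_J_gens[OF transitive span] by (simp add: const_diag_def)
  show ?thesis
  proof (intro conjI allI)
    show "X t \<in> span ({mpow P k | k. k \<le> 2 * t} \<union> {Jmat})"
      using span[of t] by (simp add: pow_J_gens_def)
    show "\<exists>r. \<forall>i. X t $ i $ i = r"
      using diag by blast
    show "X (Suc t) = Pq q P ** X t ** Pq q P + (q^2 * X t $ i $ i) *\<^sub>R (mat 1 - P ** P)" for i
      by (rule step[OF span])
  qed
qed

end
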